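(* Let $10\le n\le 12$, and let $\frac{p_1}{q_1},\frac{p_2}{q_2},\frac{p_3}{q_3},\dots$ be the convergents (in lowest terms) of the simple continued fraction expansion of $\sqrt n$, indexed so that $\frac{p_1}{q_1}=\frac31$. (1) For each positive odd integer $k$, set $d_k=\frac12(p_k-3)$, $m_k=\frac12(q_k-1)$ and $D_k=d_kH-m_kE$. Then $D_k$ is an integral effective divisor class with $\chi(D_k)=1$ and $2B\cdot D_k<B\cdot K$. (2) If $D$ is an effective divisor class with $\chi(D)\ge1$ and there is an ample divisor $A_t$ with $2A_t\cdot D<A_t\cdot K$, then $D=D_k$ for some positive odd integer $k$.
   Context: Let $X$ be the blowup of $\mathbb{P}^2_{\mathbb{C}}$ at $n$ very general points, with $H$ the pullback of a line class, $E_i$ the exceptional divisors, $E=\sum_iE_i$, and $K=K_X=-3H+E$. For real $t$, $A_t=tH-E$, and $B=\sqrt nH-E$. Write $\chi(D)=\chi(\mathcal{O}_X(D))$; effective means the class of an effective divisor (zero allowed). *)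

theory Defs
  imports Complex_Main
begin

fun cf_rem :: "real \<Rightarrow> nat \<Rightarrow> real" where
  "cf_rem x 0 = x"
| "cf_rem x (Suc i) = 1 / (cf_rem x i - of_int \<lfloor>cf_rem x i\<rfloor>)"

definition cf_a :: "real \<Rightarrow> nat \<Rightarrow> int" where
  "cf_a x i = \<lfloor>cf_rem x i\<rfloor>"

text \<open>Standard recurrences h_i = a_i h_(i-1) + h_(i-2), with h_(-2)=0, h_(-1)=1,
  k_(-2)=1, k_(-1)=0; the value at index j stands for h_(j-2), resp. k_(j-2).
  These convergents are automatically in lowest terms.\<close>
fun cnum :: "real \<Rightarrow> nat \<Rightarrow> int" where
  "cnum x 0 = 0"
| "cnum x (Suc 0) = 1"
| "cnum x (Suc (Suc i)) = cf_a x i * cnum x (Suc i) + cnum x i"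

fun cden :: "real \<Rightarrow> nat \<Rightarrow> int" where
  "cden x 0 = 1"
| "cden x (Suc 0) = 0"
| "cden x (Suc (Suc i)) = cf_a x i * cden x (Suc i) + cden x i"

text \<open>Paper's indexing: p_1/q_1 = a_0/1 is the first convergent, i.e. p_k = h_(k-1).\<close>
definition cf_p :: "real \<Rightarrow> nat \<Rightarrow> int" where "cf_p x k = cnum x (k + 1)"
definition cf_q :: "real \<Rightarrow> nat \<Rightarrow> int" where "cf_q x k = cden x (k + 1)"

type_synonym pt = "complex \<times> complex \<times> complex"

text \<open>A homogeneous form of degree d in x,y,z, given by its coefficient function on exponents.\<close>
definition form_monos :: "nat \<Rightarrow> (nat \<times> nat \<times> nat) set" where
  "form_monos d = {(a,b,e). a \<le> d \<and> b \<le> d \<and> e \<le> d \<and> a + b + e = d}"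

definition hom_form :: "nat \<Rightarrow> (nat \<times> nat \<times> nat \<Rightarrow> complex) \<Rightarrow> bool" where
  "hom_form d c \<longleftrightarrow> (\<forall>u. c u \<noteq> 0 \<longrightarrow> u \<in> form_monos d)"

definition ffac :: "nat \<Rightarrow> nat \<Rightarrow> nat" where
  "ffac a i = fact a div fact (a - i)"

text \<open>Value at P of the partial derivative d^i/dx^i d^j/dy^j d^l/dz^l of the form.\<close>
definition pd_eval :: "nat \<Rightarrow> (nat \<times> nat \<times> nat \<Rightarrow> complex) \<Rightarrow> nat \<times> nat \<times> nat \<Rightarrow> pt \<Rightarrow> complex" where
  "pd_eval d c ijl P =
     (case ijl of (i,j,l) \<Rightarrow> case P of (x,y,z) \<Rightarrow>
       (\<Sum>(a,b,e)\<in>form_monos d.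
          if i \<le> a \<and> j \<le> b \<and> l \<le> e then
            c (a,b,e) * of_nat (ffac a i * ffac b j * ffac e l) * x ^ (a - i) * y ^ (b - j) * z ^ (e - l)
          else 0))"

definition mult_ge :: "nat \<Rightarrow> (nat \<times> nat \<times> nat \<Rightarrow> complex) \<Rightarrow> int \<Rightarrow> pt \<Rightarrow> bool" where
  "mult_ge d c m P \<longleftrightarrow> (\<forall>i j l. int (i + j + l) < m \<longrightarrow> pd_eval d c (i,j,l) P = 0)"

text \<open>A class dH - sum_i m_i E_i is represented by (d, m) (only m i for i < n matters).
  It is effective iff there is a nonzero form of degree d with multiplicity at least m_i at pts i.\<close>
definition effective :: "nat \<Rightarrow> (nat \<Rightarrow> pt) \<Rightarrow> int \<Rightarrow> (nat \<Rightarrow> int) \<Rightarrow> bool" where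
  "effective n pts d m \<longleftrightarrow> d \<ge> 0 \<and>
     (\<exists>c. hom_form (nat d) c \<and> (\<exists>u. c u \<noteq> 0) \<and> (\<forall>i<n. mult_ge (nat d) c (m i) (pts i)))"

text \<open>Intersection form for real classes: H^2 = 1, E_i^2 = -1, H.E_i = 0, E_i.E_j = 0.\<close>
definition inter :: "nat \<Rightarrow> real \<times> (nat \<Rightarrow> real) \<Rightarrow> real \<times> (nat \<Rightarrow> real) \<Rightarrow> real" where
  "inter n D D' = fst D * fst D' - (\<Sum>i<n. snd D i * snd D' i)"

definition icls :: "int \<Rightarrow> (nat \<Rightarrow> int) \<Rightarrow> real \<times> (nat \<Rightarrow> real)" where
  "icls d m = (of_int d, \<lambda>i. of_int (m i))"

definition canon :: "real \<times> (nat \<Rightarrow> real)" where "canon = (-3, \<lambda>_. -1)"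
definition Acls :: "real \<Rightarrow> real \<times> (nat \<Rightarrow> real)" where "Acls t = (t, \<lambda>_. 1)"
definition Bcls :: "nat \<Rightarrow> real \<times> (nat \<Rightarrow> real)" where "Bcls n = (sqrt n, \<lambda>_. 1)"

text \<open>Euler characteristic chi(O_X(D)) (Riemann-Roch on the rational surface X):
  chi(dH - sum m_i E_i) = (d+1)(d+2)/2 - sum_i m_i(m_i+1)/2.\<close>
definition chi :: "nat \<Rightarrow> int \<Rightarrow> (nat \<Rightarrow> int) \<Rightarrow> int" where
  "chi n d m = (d + 1) * (d + 2) div 2 - (\<Sum>i<n. m i * (m i + 1) div 2)"

text \<open>Ampleness of the real divisor A_t (Nakai-Moishezon criterion for R-divisors):
  A_t^2 > 0 and A_t . C > 0 for every curve, equivalently for every nonzero effective class.\<close>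
definition ample_A :: "nat \<Rightarrow> (nat \<Rightarrow> pt) \<Rightarrow> real \<Rightarrow> bool" where
  "ample_A n pts t \<longleftrightarrow> inter n (Acls t) (Acls t) > 0 \<and>
     (\<forall>d m. effective n pts d m \<and> (d \<noteq> 0 \<or> (\<exists>i<n. m i \<noteq> 0)) \<longrightarrow> inter n (Acls t) (icls d m) > 0)"

text \<open>Polynomials in N variables: finitely supported coefficient functions on exponent vectors
  supported in the first N variables.\<close>
definition mpoly_ok :: "nat \<Rightarrow> ((nat \<Rightarrow> nat) \<Rightarrow> complex) \<Rightarrow> bool" where
  "mpoly_ok N c \<longleftrightarrow> finite {\<alpha>. c \<alpha> \<noteq> 0} \<and> (\<forall>\<alpha>. c \<alpha> \<noteq> 0 \<longrightarrow> (\<forall>v\<ge>N. \<alpha> v = 0))"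

definition mpoly_eval :: "nat \<Rightarrow> ((nat \<Rightarrow> nat) \<Rightarrow> complex) \<Rightarrow> (nat \<Rightarrow> complex) \<Rightarrow> complex" where
  "mpoly_eval N c x = (\<Sum>\<alpha>\<in>{\<alpha>. c \<alpha> \<noteq> 0}. c \<alpha> * (\<Prod>v<N. x v ^ \<alpha> v))"

definition flat_pts :: "(nat \<Rightarrow> pt) \<Rightarrow> nat \<Rightarrow> complex" where
  "flat_pts pts v = (case pts (v div 3) of (x,y,z) \<Rightarrow>
       if v mod 3 = 0 then x else if v mod 3 = 1 then y else z)"

text \<open>P holds for n very general points of P^2: there is a countable family of nonzero polynomials
  in the 3n homogeneous coordinates such that P holds for every configuration of nonzero coordinate
  vectors outside the union of their zero loci.\<close>
definition very_general :: "nat \<Rightarrow> ((nat \<Rightarrow> pt) \<Rightarrow> bool) \<Rightarrow> bool" where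
  "very_general n P \<longleftrightarrow> (\<exists>F :: nat \<Rightarrow> ((nat \<Rightarrow> nat) \<Rightarrow> complex).
     (\<forall>j. mpoly_ok (3 * n) (F j) \<and> (\<exists>\<alpha>. F j \<alpha> \<noteq> 0)) \<and>
     (\<forall>pts. (\<forall>i<n. pts i \<noteq> (0,0,0)) \<and> (\<forall>j. mpoly_eval (3 * n) (F j) (flat_pts pts) \<noteq> 0) \<longrightarrow> P pts))"

end

theory Submission
  imports Defs "HOL-Analysis.Convex"
begin

text \<open>
  For \<open>n = 10, 11, 12\<close> let \<open>a (n - 9) = 6\<close>. Then \<open>\<surd>n = [3; a, 6, a, 6, \<dots>]\<close>, the fundamental unit
  is \<open>\<epsilon> = (3a + 1) + a\<surd>n\<close>, and the convergents of odd index \<open>k = 2j + 1\<close> satisfy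
  \<open>p\<^sub>k + q\<^sub>k\<surd>n = (3 + \<surd>n) \<epsilon>\<^sup>j\<close>. Dividing by \<open>\<epsilon>\<close> is a descent on the positive solutions of
  \<open>p\<^sup>2 - n q\<^sup>2 = 9 - n\<close>; a quotient with negative rational part is the conjugate of a convergent,
  which forces \<open>(p, q) = (3, 1)\<close>. So these convergents are exactly the positive solutions.

  Writing \<open>p = 2d + 3\<close> and \<open>q\<^sub>i = 2m\<^sub>i + 1\<close>, Riemann-Roch reads \<open>8 \<chi>(D) = p\<^sup>2 - \<Sum> q\<^sub>i\<^sup>2 + n - 1\<close>. For
  (1), this gives \<open>\<chi>(D\<^sub>k) = 1\<close>, \<open>2B.D\<^sub>k < B.K\<close> is \<open>p < q\<surd>n\<close>, and \<open>D\<^sub>k\<close> is effective because forms of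
  degree \<open>d\<close> outnumber the linear conditions imposed by the points: after Euler's identity only the
  derivatives in \<open>x, y\<close> have to vanish, once all points lie in the chart \<open>z \<noteq> 0\<close>, which is the only
  use of very generality. For (2), \<open>A\<^sub>t\<^sup>2 > 0\<close> and \<open>2A\<^sub>t.D < A\<^sub>t.K\<close> give \<open>n p\<^sup>2 < (\<Sum> q\<^sub>i)\<^sup>2\<close>; with
  \<open>\<chi>(D) \<ge> 1\<close> the spread \<open>n \<Sum> q\<^sub>i\<^sup>2 - (\<Sum> q\<^sub>i)\<^sup>2\<close> is below \<open>n (n - 9) \<le> 3n\<close>, which forces equal
  multiplicities, and then \<open>9 - n \<le> p\<^sup>2 - n q\<^sup>2 < 0\<close> together with \<open>8 \<chi>(D) \<ge> 8\<close> forces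
  \<open>p\<^sup>2 - n q\<^sup>2 = 9 - n\<close>.
\<close>

section \<open>The continued fraction of \<open>\<surd>n\<close>\<close>

lemma brahmagupta_identity:
  fixes u v p q N :: "'a::comm_ring_1"
  shows "(u * p + N * v * q)\<^sup>2 - N * (v * p + u * q)\<^sup>2 = (u\<^sup>2 - N * v\<^sup>2) * (p\<^sup>2 - N * q\<^sup>2)"
  by (simp add: power2_eq_square algebra_simps)

locale sqrt_period_two =
  fixes n :: nat and a :: int
  assumes n_gt_9: "9 < n" and a_mult: "a * (int n - 9) = 6"
begin

lemma a_pos: "a > 0"
  using a_mult n_gt_9 zero_less_mult_iff[of a "int n - 9"] by simp

lemma n_le_15: "n \<le> 15"
proof -
  have "int n - 9 \<le> a * (int n - 9)" using a_pos n_gt_9 by simp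
  then show ?thesis using a_mult by simp
qed

lemma sqrt_bounds: "3 < sqrt n" "sqrt n < 4"
proof -
  have "3\<^sup>2 < real n" "real n < 4\<^sup>2" using n_gt_9 n_le_15 by simp_all
  then show "3 < sqrt n" "sqrt n < 4"
    using real_less_rsqrt[of 3 "real n"] real_less_lsqrt[of 4 "real n"] by simp_all
qed

lemma a_mult_real: "real_of_int a * (real n - 9) = 6"
  using a_mult by (metis of_int_mult of_int_numeral of_int_diff of_int_of_nat_eq)

lemma floor_odd_quotient: "\<lfloor>(sqrt n + 3) / (real n - 9)\<rfloor> = a"
proof -
  have "sqrt n < 3 + (real n - 9)"
    using sqrt_bounds n_gt_9 real_less_lsqrt[of "3 + (real n - 9)" "real n"]
    by (simp add: power2_eq_square algebra_simps)
  then show ?thesis using sqrt_bounds n_gt_9 a_mult_real by (simp add: floor_eq_iff field_simps)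
qed

lemma cf_rem_sqrt:
  "cf_rem (sqrt n) (2 * j + 1) = (sqrt n + 3) / (real n - 9) \<and> cf_rem (sqrt n) (2 * j + 2) = sqrt n + 3"
proof -
  let ?s = "sqrt (real n)" and ?c = "real n - 9"
  have "?c > 0" using n_gt_9 by simp
  have inv_even: "1 / (?s - 3) = (?s + 3) / ?c"
    using sqrt_bounds \<open>?c > 0\<close> by (simp add: field_simps)
  have "(?s + 3) / ?c - a = (?s - 3) / ?c" using \<open>?c > 0\<close> a_mult_real by (simp add: field_simps)
  then have "1 / ((?s + 3) / ?c - a) = ?c * (1 / (?s - 3))" by simp
  then have inv_odd: "1 / ((?s + 3) / ?c - a) = ?s + 3" using inv_even \<open>?c > 0\<close> by simp
  have floor_even: "\<lfloor>?s + 3\<rfloor> = 6" and floor_first: "\<lfloor>?s\<rfloor> = 3"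
    using sqrt_bounds by (simp_all add: floor_eq_iff)
  have step: "cf_rem ?s (Suc i) = 1 / (y - \<lfloor>y\<rfloor>)" if "cf_rem ?s i = y" for i y
    using that by simp
  have odd_to_even: "cf_rem ?s (Suc i) = ?s + 3" if "cf_rem ?s i = (?s + 3) / ?c" for i
    using step[OF that] floor_odd_quotient inv_odd by simp
  have even_to_odd: "cf_rem ?s (Suc i) = (?s + 3) / ?c" if "cf_rem ?s i = ?s + 3" for i
    using step[OF that] floor_even inv_even by simp
  have first: "cf_rem ?s 1 = (?s + 3) / ?c"
    using step[of 0 ?s] floor_first inv_even by simp
  show ?thesis
  proof (induction j)
    case 0
    then show ?case using first odd_to_even[OF first] by simp
  next
    case (Suc j)
    then have "cf_rem ?s (2 * Suc j + 1) = (?s + 3) / ?c"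
      using even_to_odd[of "2 * j + 2"] by (simp del: cf_rem.simps)
    then show ?case using odd_to_even[of "2 * Suc j + 1"] by (simp del: cf_rem.simps)
  qed
qed

lemma cf_a_sqrt:
  "cf_a (sqrt n) 0 = 3" "cf_a (sqrt n) (2 * j + 1) = a" "cf_a (sqrt n) (2 * j + 2) = 6"
proof -
  show "cf_a (sqrt n) 0 = 3" using sqrt_bounds by (simp add: cf_a_def floor_eq_iff)
  show "cf_a (sqrt n) (2 * j + 1) = a"
    using cf_rem_sqrt[of j] floor_odd_quotient by (simp add: cf_a_def del: cf_rem.simps)
  show "cf_a (sqrt n) (2 * j + 2) = 6"
    using cf_rem_sqrt[of j] sqrt_bounds by (simp add: cf_a_def floor_eq_iff del: cf_rem.simps)
qed

text \<open>With \<open>h i = cnum (sqrt n) (i + 2)\<close> and \<open>k i = cden (sqrt n) (i + 2)\<close> this reads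
  \<open>h (2j) + k (2j) \<surd>n = (h (2j + 1) + k (2j + 1) \<surd>n) (\<surd>n - 3)\<close>.\<close>

lemma convergent_even_odd:
  "cnum (sqrt n) (2 * j + 2) = n * cden (sqrt n) (2 * j + 3) - 3 * cnum (sqrt n) (2 * j + 3) \<and>
   cden (sqrt n) (2 * j + 2) = cnum (sqrt n) (2 * j + 3) - 3 * cden (sqrt n) (2 * j + 3)"
proof (induction j)
  case 0
  have "cnum (sqrt n) 2 = 3" "cden (sqrt n) 2 = 1" "cnum (sqrt n) 3 = 3 * a + 1" "cden (sqrt n) 3 = a"
    using cf_a_sqrt(1) cf_a_sqrt(2)[of 0] by (simp_all add: numeral_eq_Suc)
  then show ?case using a_mult cf_a_sqrt(1) by (simp add: algebra_simps numeral_eq_Suc)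
next
  case (Suc j)
  let ?h = "cnum (sqrt n) (2 * j + 2)" and ?k = "cden (sqrt n) (2 * j + 2)"
  let ?h1 = "cnum (sqrt n) (2 * j + 3)" and ?k1 = "cden (sqrt n) (2 * j + 3)"
  have even: "cnum (sqrt n) (2 * Suc j + 2) = 6 * ?h1 + ?h" "cden (sqrt n) (2 * Suc j + 2) = 6 * ?k1 + ?k"
    using cf_a_sqrt(3)[of j] by (simp_all add: numeral_eq_Suc)
  have odd: "cnum (sqrt n) (2 * Suc j + 3) = a * cnum (sqrt n) (2 * Suc j + 2) + ?h1"
    "cden (sqrt n) (2 * Suc j + 3) = a * cden (sqrt n) (2 * Suc j + 2) + ?k1"
    using cf_a_sqrt(2)[of "Suc j"] by (simp_all add: numeral_eq_Suc)
  have period: "6 * h1 + h = n * (a * (6 * k1 + k) + k1) - 3 * (a * (6 * h1 + h) + h1) \<and>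
      6 * k1 + k = (a * (6 * h1 + h) + h1) - 3 * (a * (6 * k1 + k) + k1)"
    if "h = n * k1 - 3 * h1" "k = h1 - 3 * k1" for h k h1 k1 :: int
  proof -
    have "a * (int n - 9) * h1 = 6 * h1" "a * (int n - 9) * k1 = 6 * k1" using a_mult by simp_all
    then show ?thesis unfolding that by (simp add: algebra_simps)
  qed
  show ?case unfolding odd even using Suc.IH by (intro period) simp_all
qed

lemma first_convergent: "cf_p (sqrt n) 1 = 3" "cf_q (sqrt n) 1 = 1"
  using cf_a_sqrt(1) by (simp_all add: cf_p_def cf_q_def numeral_eq_Suc)

lemma convergent_mult_unit:
  "cf_p (sqrt n) (2 * Suc j + 1) = (3 * a + 1) * cf_p (sqrt n) (2 * j + 1) + n * a * cf_q (sqrt n) (2 * j + 1)"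
  "cf_q (sqrt n) (2 * Suc j + 1) = a * cf_p (sqrt n) (2 * j + 1) + (3 * a + 1) * cf_q (sqrt n) (2 * j + 1)"
proof -
  let ?h = "cnum (sqrt n) (2 * j + 2)" and ?k = "cden (sqrt n) (2 * j + 2)"
  let ?h1 = "cnum (sqrt n) (2 * j + 3)" and ?k1 = "cden (sqrt n) (2 * j + 3)"
  have even: "cnum (sqrt n) (2 * Suc j + 2) = 6 * ?h1 + ?h" "cden (sqrt n) (2 * Suc j + 2) = 6 * ?k1 + ?k"
    using cf_a_sqrt(3)[of j] by (simp_all add: numeral_eq_Suc)
  have period: "6 * h1 + h = (3 * a + 1) * h + n * a * k \<and> 6 * k1 + k = a * h + (3 * a + 1) * k"
    if "h = n * k1 - 3 * h1" "k = h1 - 3 * k1" for h k h1 k1 :: int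
  proof -
    have "a * (int n - 9) * h1 = 6 * h1" "a * (int n - 9) * k1 = 6 * k1" using a_mult by simp_all
    then show ?thesis unfolding that by (simp add: algebra_simps)
  qed
  show "cf_p (sqrt n) (2 * Suc j + 1) = (3 * a + 1) * cf_p (sqrt n) (2 * j + 1) + n * a * cf_q (sqrt n) (2 * j + 1)"
    "cf_q (sqrt n) (2 * Suc j + 1) = a * cf_p (sqrt n) (2 * j + 1) + (3 * a + 1) * cf_q (sqrt n) (2 * j + 1)"
    unfolding cf_p_def cf_q_def using even period[OF conjunct1[OF convergent_even_odd[of j]]
      conjunct2[OF convergent_even_odd[of j]]] by (simp_all del: cnum.simps cden.simps)
qed

lemma fundamental_unit: "(3 * a + 1)\<^sup>2 - int n * a\<^sup>2 = 1"
proof -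
  have "(3 * a + 1)\<^sup>2 - int n * a\<^sup>2 = 6 * a + 1 - a * (a * (int n - 9))"
    by (simp add: power2_eq_square algebra_simps)
  then show ?thesis using a_mult by simp
qed

lemma convergent_pell:
  "(cf_p (sqrt n) (2 * j + 1))\<^sup>2 - n * (cf_q (sqrt n) (2 * j + 1))\<^sup>2 = 9 - int n \<and>
   cf_p (sqrt n) (2 * j + 1) > 0 \<and> cf_q (sqrt n) (2 * j + 1) > 0 \<and>
   odd (cf_p (sqrt n) (2 * j + 1)) \<and> odd (cf_q (sqrt n) (2 * j + 1))"
proof (induction j)
  case 0
  then show ?case using first_convergent by simp
next
  case (Suc j)
  define p where "p = cf_p (sqrt n) (2 * j + 1)"
  define q where "q = cf_q (sqrt n) (2 * j + 1)"
  have IH: "p\<^sup>2 - n * q\<^sup>2 = 9 - int n" "p > 0" "q > 0" "odd p" "odd q"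
    using Suc.IH unfolding p_def q_def by auto
  have "((3 * a + 1) * p + n * a * q)\<^sup>2 - n * (a * p + (3 * a + 1) * q)\<^sup>2 = 9 - int n"
    using brahmagupta_identity[of "3 * a + 1" p "int n" a q] fundamental_unit IH(1) by simp
  moreover have "(3 * a + 1) * p + n * a * q > 0" "a * p + (3 * a + 1) * q > 0"
    using a_pos IH(2,3) n_gt_9 by (auto intro!: add_pos_pos mult_pos_pos)
  moreover have "int n * a = a + 2 * (4 * a + 3)" using a_mult by (simp add: algebra_simps)
  then have "odd ((3 * a + 1) * p + n * a * q) \<and> odd (a * p + (3 * a + 1) * q)"
    using IH(4,5) by simp
  ultimately show ?case unfolding convergent_mult_unit p_def q_def by simp
qed

lemma pell_descent:
  fixes p q :: int
  assumes pell: "p\<^sup>2 - n * q\<^sup>2 = 9 - int n" and "p > 0" "q > 1"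
  shows "0 < (3 * a + 1) * q - a * p" "(3 * a + 1) * q - a * p < q"
proof -
  have "(a * p)\<^sup>2 = a\<^sup>2 * (n * q\<^sup>2 - (int n - 9))"
    using pell by (simp add: power_mult_distrib)
  then have p_sq: "(a * p)\<^sup>2 = a\<^sup>2 * (n * q\<^sup>2) - a * (a * (int n - 9))"
    by (simp add: power2_eq_square algebra_simps)
  have "((3 * a + 1) * q)\<^sup>2 - (a * p)\<^sup>2 = ((3 * a + 1)\<^sup>2 - int n * a\<^sup>2) * q\<^sup>2 + 6 * a"
    unfolding p_sq a_mult by (simp add: power2_eq_square algebra_simps)
  also have "\<dots> > 0" using fundamental_unit a_pos by (simp add: add_nonneg_pos)
  finally have "(a * p)\<^sup>2 < ((3 * a + 1) * q)\<^sup>2" by simp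
  then show "0 < (3 * a + 1) * q - a * p"
    using a_pos \<open>q > 1\<close> power2_less_imp_less[of "a * p" "(3 * a + 1) * q"] by simp
  have "(a * p)\<^sup>2 - (3 * a * q)\<^sup>2 = a * (a * (int n - 9)) * (q\<^sup>2 - 1)"
    unfolding p_sq by (simp add: power2_eq_square algebra_simps)
  also have "\<dots> > 0" unfolding a_mult using a_pos \<open>q > 1\<close> by (simp add: power_less_one_iff)
  finally have "(3 * a * q)\<^sup>2 < (a * p)\<^sup>2" by simp
  then show "(3 * a + 1) * q - a * p < q"
    using a_pos \<open>p > 0\<close> power2_less_imp_less[of "3 * a * q" "a * p"] by (simp add: algebra_simps)
qed

text \<open>For \<open>j > 0\<close>, \<open>\<epsilon> (-p + q\<surd>n)\<close> is the conjugate of the previous convergent, with negative rational part.\<close>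

lemma unit_times_conjugate_convergent:
  assumes "0 < n * a * cf_q (sqrt n) (2 * j + 1) - (3 * a + 1) * cf_p (sqrt n) (2 * j + 1)"
  shows "j = 0"
proof (cases j)
  case (Suc i)
  have "n * a * cf_q (sqrt n) (2 * j + 1) - (3 * a + 1) * cf_p (sqrt n) (2 * j + 1)
      = - (((3 * a + 1)\<^sup>2 - int n * a\<^sup>2) * cf_p (sqrt n) (2 * i + 1))"
    unfolding Suc convergent_mult_unit by (simp add: power2_eq_square algebra_simps)
  then show ?thesis using assms fundamental_unit convergent_pell[of i] by simp
qed

lemma pell_solution_is_convergent:
  fixes p q :: int
  assumes "p\<^sup>2 - n * q\<^sup>2 = 9 - int n" "p > 0" "q > 0"
  shows "\<exists>j. p = cf_p (sqrt n) (2 * j + 1) \<and> q = cf_q (sqrt n) (2 * j + 1)"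
  using assms
proof (induction "nat q" arbitrary: p q rule: less_induct)
  case less
  show ?case
  proof (cases "q = 1")
    case True
    then have "p\<^sup>2 = 3\<^sup>2" using less.prems(1) by simp
    then have "p = 3" using less.prems(2) power2_eq_iff_nonneg[of p 3] by simp
    then show ?thesis using True first_convergent by (intro exI[of _ 0]) simp
  next
    case False
    let ?u = "3 * a + 1"
    define p1 where "p1 = ?u * p - n * a * q"
    define q1 where "q1 = ?u * q - a * p"
    have "?u * p1 + n * a * q1 = (?u\<^sup>2 - int n * a\<^sup>2) * p" "a * p1 + ?u * q1 = (?u\<^sup>2 - int n * a\<^sup>2) * q"
      unfolding p1_def q1_def by (simp_all add: power2_eq_square algebra_simps)
    then have undo: "p = ?u * p1 + n * a * q1" "q = a * p1 + ?u * q1"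
      using fundamental_unit by simp_all
    have pell1: "p1\<^sup>2 - n * q1\<^sup>2 = 9 - int n"
      using brahmagupta_identity[of ?u p "int n" "- a" q] fundamental_unit less.prems(1)
      unfolding p1_def q1_def by simp
    have q1: "0 < q1" "q1 < q"
      using pell_descent[OF less.prems(1,2)] False less.prems(3) unfolding q1_def by simp_all
    have "int n * 1 \<le> int n * q1\<^sup>2" using q1(1) by (intro mult_left_mono) (simp_all add: one_le_power)
    then have "p1 \<noteq> 0" using pell1 by auto
    then obtain j where j: "\<bar>p1\<bar> = cf_p (sqrt n) (2 * j + 1)" "q1 = cf_q (sqrt n) (2 * j + 1)"
      using less.hyps[of q1 "\<bar>p1\<bar>"] pell1 q1 by auto
    show ?thesis
    proof (cases "p1 > 0")
      case True
      then show ?thesis using undo j convergent_mult_unit[of j] by (intro exI[of _ "Suc j"]) simp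
    next
      case False
      then have "p1 = - cf_p (sqrt n) (2 * j + 1)" using j(1) by simp
      then have "j = 0" using undo(1) j(2) less.prems(2) unit_times_conjugate_convergent[of j] by simp
      then have "q = 1" using undo(2) \<open>p1 = - cf_p (sqrt n) (2 * j + 1)\<close> j(2) first_convergent by simp
      then show ?thesis using \<open>q \<noteq> 1\<close> by simp
    qed
  qed
qed

end

section \<open>Riemann-Roch and the spread of the multiplicities\<close>

definition scaled_variance :: "nat \<Rightarrow> (nat \<Rightarrow> int) \<Rightarrow> int" where
  "scaled_variance n e = int n * (\<Sum>i<n. (e i)\<^sup>2) - (\<Sum>i<n. e i)\<^sup>2"

lemma scaled_variance_affine:
  "scaled_variance n (\<lambda>i. b * e i + c) = b\<^sup>2 * scaled_variance n e"
  unfolding scaled_variance_def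
  by (simp add: power2_eq_square algebra_simps sum.distrib sum_distrib_left)

text \<open>Cauchy-Schwarz on the support \<open>Z\<close> of \<open>e\<close> gives \<open>(\<Sum> e)\<^sup>2 \<le> |Z| \<Sum> e\<^sup>2\<close>, and \<open>\<Sum> e\<^sup>2 \<ge> |Z|\<close>.\<close>

lemma scaled_variance_ge_pinned:
  assumes "i < n" "e i = 0" "j < n" "e j \<noteq> 0"
  shows "scaled_variance n e \<ge> int n - 1"
proof -
  define Z where "Z = {k \<in> {..<n}. e k \<noteq> 0}"
  define z where "z = card Z"
  have "finite Z" "j \<in> Z" "Z \<subseteq> {..<n} - {i}" using assms unfolding Z_def by auto
  then have z: "1 \<le> z" "z \<le> n - 1"
    using assms(1) card_mono[of "{..<n} - {i}" Z] unfolding z_def by (auto simp: Suc_le_eq card_gt_0_iff)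
  have sum_Z: "(\<Sum>k<n. e k) = (\<Sum>k\<in>Z. e k)" "(\<Sum>k<n. (e k)\<^sup>2) = (\<Sum>k\<in>Z. (e k)\<^sup>2)"
    unfolding Z_def by (auto intro: sum.mono_neutral_right)
  have "real_of_int ((\<Sum>k\<in>Z. e k)\<^sup>2) \<le> real_of_int ((\<Sum>k\<in>Z. (e k)\<^sup>2) * int z)"
    using sum_squared_le_sum_of_squares[of "\<lambda>k. real_of_int (e k)" Z] unfolding z_def by simp
  then have cauchy_schwarz: "(\<Sum>k\<in>Z. e k)\<^sup>2 \<le> (\<Sum>k\<in>Z. (e k)\<^sup>2) * int z"
    by linarith
  have "int z = (\<Sum>k\<in>Z. 1)" unfolding z_def by simp
  also have "\<dots> \<le> (\<Sum>k\<in>Z. (e k)\<^sup>2)"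
  proof (intro sum_mono)
    fix k assume "k \<in> Z"
    then have "0 < (e k)\<^sup>2" by (simp add: Z_def)
    then show "1 \<le> (e k)\<^sup>2" by linarith
  qed
  finally have "int z \<le> (\<Sum>k\<in>Z. (e k)\<^sup>2)" .
  have "0 \<le> (int z - 1) * (int n - int z - 1)" using z by simp
  then have "int n - 1 \<le> int z * (int n - int z)" by (simp add: algebra_simps)
  also have "\<dots> \<le> (\<Sum>k\<in>Z. (e k)\<^sup>2) * (int n - int z)"
    using \<open>int z \<le> (\<Sum>k\<in>Z. (e k)\<^sup>2)\<close> z by (intro mult_right_mono) auto
  also have "\<dots> \<le> scaled_variance n e"
    unfolding scaled_variance_def sum_Z using cauchy_schwarz by (simp add: algebra_simps)
  finally show ?thesis .
qed

lemma scaled_variance_ge: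
  assumes "i < n" "j < n" "e i \<noteq> e j"
  shows "scaled_variance n e \<ge> int n - 1"
proof -
  have "scaled_variance n e = scaled_variance n (\<lambda>k. e k - e i)"
    using scaled_variance_affine[of n 1 e "- e i"] by simp
  also have "\<dots> \<ge> int n - 1"
    using assms by (intro scaled_variance_ge_pinned[of i _ _ j]) simp_all
  finally show ?thesis .
qed

lemma chi_odd_squares: "8 * chi n d m = (2 * d + 3)\<^sup>2 - (\<Sum>i<n. (2 * m i + 1)\<^sup>2) + int n - 1"
proof -
  have half: "8 * (x * (x + 1) div 2) = (2 * x + 1)\<^sup>2 - 1" for x :: int
  proof -
    have "8 * (x * (x + 1) div 2) = 4 * (2 * (x * (x + 1) div 2))" by simp
    also have "\<dots> = 4 * (x * (x + 1))" by (simp add: even_two_times_div_two)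
    finally show ?thesis by (simp add: power2_eq_square algebra_simps)
  qed
  have "8 * chi n d m = 8 * ((d + 1) * (d + 1 + 1) div 2) - (\<Sum>i<n. 8 * (m i * (m i + 1) div 2))"
    unfolding chi_def by (simp add: sum_distrib_left algebra_simps)
  also have "\<dots> = (2 * d + 3)\<^sup>2 - (\<Sum>i<n. (2 * m i + 1)\<^sup>2) + int n - 1"
    unfolding half by (simp add: sum_subtractf algebra_simps)
  finally show ?thesis .
qed

lemma inter_Acls:
  "inter n (Acls t) (Acls t) = t\<^sup>2 - n"
  "inter n (Acls t) (icls d m) = t * d - (\<Sum>i<n. m i)"
  "inter n (Acls t) canon = n - 3 * t"
  by (simp_all add: inter_def Acls_def icls_def canon_def power2_eq_square)

lemma inter_Bcls:
  "inter n (Bcls n) (icls d (\<lambda>_. k)) = sqrt n * d - n * k"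
  "inter n (Bcls n) canon = n - 3 * sqrt n"
  by (simp_all add: inter_def Bcls_def icls_def canon_def)

lemma sqrt_mult_less_of_sq_less:
  fixes p q :: int and N :: nat
  assumes "p\<^sup>2 < int N * q\<^sup>2" "q > 0"
  shows "sqrt N * p < real N * q"
proof -
  have "N > 0" using assms(1) by (rule contrapos_pp) simp
  have "real_of_int (p\<^sup>2) < real_of_int (int N * q\<^sup>2)" using assms(1) by (simp only: of_int_less_iff)
  then have "(real_of_int p)\<^sup>2 < real N * (real_of_int q)\<^sup>2" by simp
  then have "(sqrt (real N) * real_of_int p)\<^sup>2 < real N * (real N * (real_of_int q)\<^sup>2)"
    using \<open>N > 0\<close> by (simp add: power_mult_distrib)
  also have "\<dots> = (real N * real_of_int q)\<^sup>2" by (simp add: power2_eq_square)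
  finally show ?thesis by (rule power2_less_imp_less) (use assms(2) in simp)
qed

lemma ample_inequality_sum_bound:
  fixes d :: int and m :: "nat \<Rightarrow> int" and t :: real
  assumes "d \<ge> 0" "t > 0" "t\<^sup>2 > n"
    and ineq: "2 * inter n (Acls t) (icls d m) < inter n (Acls t) canon"
  shows "n * (2 * d + 3)\<^sup>2 < (\<Sum>i<n. 2 * m i + 1)\<^sup>2" "(\<Sum>i<n. 2 * m i + 1) > 0"
proof -
  define p where "p = 2 * d + 3"
  define S where "S = (\<Sum>i<n. 2 * m i + 1)"
  have "p > 0" unfolding p_def using \<open>d \<ge> 0\<close> by simp
  have "real_of_int S = 2 * (\<Sum>i<n. real_of_int (m i)) + n"
    unfolding S_def by (simp add: sum.distrib sum_distrib_left)
  then have tpS: "t * p < S"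
    using ineq unfolding inter_Acls p_def by (simp add: algebra_simps)
  have "real n * p\<^sup>2 < (t * p)\<^sup>2"
    using assms(2,3) \<open>p > 0\<close> by (simp add: power_mult_distrib)
  also have "\<dots> < (real_of_int S)\<^sup>2"
    using tpS assms(2) \<open>p > 0\<close> by (intro power_strict_mono) auto
  finally show "n * (2 * d + 3)\<^sup>2 < (\<Sum>i<n. 2 * m i + 1)\<^sup>2"
    unfolding p_def S_def by (metis of_int_less_iff of_int_mult of_int_of_nat_eq of_int_power)
  have "0 < t * p" using assms(2) \<open>p > 0\<close> by simp
  then show "(\<Sum>i<n. 2 * m i + 1) > 0" using tpS unfolding S_def by linarith
qed

lemma small_class_solves_pell:
  fixes d :: int and m :: "nat \<Rightarrow> int" and t :: real
  assumes n: "9 < n" "n \<le> 12" and "d \<ge> 0" and chi: "chi n d m \<ge> 1"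
    and t: "t > 0" "t\<^sup>2 > n"
    and ineq: "2 * inter n (Acls t) (icls d m) < inter n (Acls t) canon"
  shows "(\<forall>i<n. m i = m 0) \<and> (2 * d + 3)\<^sup>2 - n * (2 * m 0 + 1)\<^sup>2 = 9 - int n \<and> 2 * m 0 + 1 > 0"
proof -
  define p where "p = 2 * d + 3"
  define S where "S = (\<Sum>i<n. 2 * m i + 1)"
  define T where "T = (\<Sum>i<n. (2 * m i + 1)\<^sup>2)"
  have Sp: "n * p\<^sup>2 < S\<^sup>2" and "S > 0"
    using ample_inequality_sum_bound[OF \<open>d \<ge> 0\<close> t ineq] unfolding p_def S_def by simp_all
  have chi8: "8 * chi n d m = p\<^sup>2 - T + n - 1" unfolding p_def T_def by (rule chi_odd_squares)
  have "scaled_variance n (\<lambda>i. 2 * m i + 1) = n * T - S\<^sup>2"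
    unfolding scaled_variance_def S_def T_def ..
  also have "\<dots> < n * (int n - 9)"
    using chi chi8 Sp n mult_left_mono[of T "p\<^sup>2 + n - 9" "int n"] by (simp add: algebra_simps)
  also have "\<dots> \<le> 3 * n" using n by simp
  finally have small: "4 * scaled_variance n m < 3 * n"
    using scaled_variance_affine[of n 2 m 1] by simp
  have const: "m i = m 0" if "i < n" for i
  proof (rule ccontr)
    assume "m i \<noteq> m 0"
    then have "scaled_variance n m \<ge> int n - 1" using scaled_variance_ge[of i n 0 m] that n by simp
    then show False using small n by simp
  qed
  define q where "q = 2 * m 0 + 1"
  have "2 * m i + 1 = q" if "i < n" for i using const[OF that] unfolding q_def by simp
  then have "S = (\<Sum>i<n. q)" "T = (\<Sum>i<n. q\<^sup>2)"
    unfolding S_def T_def by (auto intro!: sum.cong)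
  then have S_q: "S = n * q" and T_q: "T = n * q\<^sup>2" by simp_all
  have "q > 0" using \<open>S > 0\<close> S_q n by (simp add: zero_less_mult_iff)
  have "int n * p\<^sup>2 < int n * (n * q\<^sup>2)"
    using Sp unfolding S_q by (simp add: power2_eq_square mult_ac)
  then have "p\<^sup>2 < n * q\<^sup>2" using n by simp
  moreover have chi_q: "8 * chi n d m = p\<^sup>2 - n * q\<^sup>2 + n - 1" using chi8 T_q by simp
  ultimately have "chi n d m < 2" using n by linarith
  then have "p\<^sup>2 - n * q\<^sup>2 = 9 - int n" using chi chi_q by linarith
  then show ?thesis using const \<open>q > 0\<close> unfolding p_def q_def by blast
qed

section \<open>Effective classes by counting parameters\<close>

lemma homogeneous_system_nontrivial_solution:
  fixes L :: "'e \<Rightarrow> 'u \<Rightarrow> 'a::field"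
  assumes "finite E" "finite U" "card E < card U"
  shows "\<exists>c. (\<exists>u\<in>U. c u \<noteq> 0) \<and> (\<forall>e\<in>E. (\<Sum>u\<in>U. L e u * c u) = 0)"
  using assms
proof (induction E arbitrary: U L rule: finite_induct)
  case empty
  then obtain u where "u \<in> U" by fastforce
  then show ?case by (intro exI[of _ "\<lambda>v. if v = u then 1 else 0"]) auto
next
  case (insert e0 E)
  show ?case
  proof (cases "\<forall>u\<in>U. L e0 u = 0")
    case True
    then show ?thesis using insert.IH[of U L] insert.prems insert.hyps by simp
  next
    case False
    then obtain u0 where u0: "u0 \<in> U" "L e0 u0 \<noteq> 0" by blast
    define U' where "U' = U - {u0}"
    \<comment> \<open>eliminate the unknown at u0 using the equation e0\<close>
    define L' where "L' e u = L e u - L e u0 / L e0 u0 * L e0 u" for e u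
    have "finite U'" "card E < card U'"
      using insert.prems insert.hyps u0(1) unfolding U'_def by auto
    then obtain c' where c': "\<exists>u\<in>U'. c' u \<noteq> 0" "\<forall>e\<in>E. (\<Sum>u\<in>U'. L' e u * c' u) = 0"
      using insert.IH[of U' L'] by blast
    define c where "c u = (if u = u0 then - (\<Sum>v\<in>U'. L e0 v * c' v) / L e0 u0 else c' u)" for u
    have split: "(\<Sum>u\<in>U. L e u * c u) = L e u0 * c u0 + (\<Sum>u\<in>U'. L e u * c' u)" for e
    proof -
      have "(\<Sum>u\<in>U. L e u * c u) = L e u0 * c u0 + (\<Sum>u\<in>U'. L e u * c u)"
        unfolding U'_def using insert.prems(1) u0(1) by (simp add: sum.remove)
      also have "(\<Sum>u\<in>U'. L e u * c u) = (\<Sum>u\<in>U'. L e u * c' u)"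
        unfolding U'_def c_def by (intro sum.cong) auto
      finally show ?thesis .
    qed
    have "(\<Sum>u\<in>U. L e u * c u) = (\<Sum>u\<in>U'. L' e u * c' u)" for e
      unfolding split L'_def using u0(2)
      by (simp add: c_def algebra_simps sum_subtractf sum_distrib_left sum_divide_distrib)
    moreover have "L' e0 u = 0" for u unfolding L'_def using u0(2) by simp
    ultimately have "\<forall>e\<in>insert e0 E. (\<Sum>u\<in>U. L e u * c u) = 0"
      using c'(2) by simp
    moreover have "\<exists>u\<in>U. c u \<noteq> 0" using c'(1) unfolding c_def U'_def by auto
    ultimately show ?thesis by blast
  qed
qed

lemma finite_pairs_sum_less: "finite {(a, b). a + b < (k::nat)}"
  by (rule finite_subset[of _ "{..<k} \<times> {..<k}"]) auto

lemma card_pairs_sum_less: "2 * card {(a, b). a + b < (k::nat)} = k * (k + 1)"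
proof (induction k)
  case 0
  then show ?case by simp
next
  case (Suc k)
  have split: "{(a, b). a + b < Suc k} = {(a, b). a + b < k} \<union> (\<lambda>a. (a, k - a)) ` {..k}"
    by (auto simp: image_iff)
  have "inj_on (\<lambda>a. (a, k - a)) {..k}" by (auto simp: inj_on_def)
  then have "card {(a, b). a + b < Suc k} = card {(a, b). a + b < k} + (k + 1)"
    unfolding split using finite_pairs_sum_less[of k] by (subst card_Un_disjoint) (auto simp: card_image)
  then show ?case using Suc.IH by simp
qed

lemma int_card_pairs_sum_less:
  assumes "k \<ge> 0"
  shows "2 * int (card {(a, b). a + b < nat k}) = k * (k + 1)"
proof -
  have "int (2 * card {(a, b). a + b < nat k}) = int (nat k * (nat k + 1))"
    by (simp only: card_pairs_sum_less)
  then show ?thesis using assms by (simp add: algebra_simps)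
qed

lemma card_form_monos: "card (form_monos d) = card {(a, b). a + b < d + 1}"
proof (rule bij_betw_same_card, rule bij_betw_imageI)
  show "inj_on (\<lambda>(a, b, e). (a, b)) (form_monos d)" by (auto simp: inj_on_def form_monos_def)
  have "(a, b) \<in> (\<lambda>(a, b, e). (a, b)) ` form_monos d" if "a + b < d + 1" for a b
    using that by (intro image_eqI[of _ _ "(a, b, d - a - b)"]) (auto simp: form_monos_def)
  then show "(\<lambda>(a, b, e). (a, b)) ` form_monos d = {(a, b). a + b < d + 1}"
    by (auto simp: form_monos_def)
qed

lemma ffac_Suc:
  assumes "i < a"
  shows "ffac a (Suc i) = ffac a i * (a - i)"
proof -
  have split: "fact a = ffac a k * fact (a - k)" if "k \<le> a" for k
    unfolding ffac_def using that by (simp add: fact_dvd)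
  have "a - i = Suc (a - Suc i)" using assms by simp
  then have "fact (a - i) = (a - i) * fact (a - Suc i)" by (metis fact_Suc of_nat_id)
  then have "ffac a (Suc i) * fact (a - Suc i) = (ffac a i * (a - i)) * fact (a - Suc i)"
    using split[of i] split[of "Suc i"] assms by (simp add: mult_ac)
  then show ?thesis by simp
qed

definition pow_deriv :: "nat \<Rightarrow> nat \<Rightarrow> complex \<Rightarrow> complex" where
  "pow_deriv a i x = (if i \<le> a then of_nat (ffac a i) * x ^ (a - i) else 0)"

lemma pow_deriv_Suc: "x * pow_deriv a (Suc i) x = of_nat (a - i) * pow_deriv a i x"
proof (cases "i < a")
  case True
  then have "a - i = Suc (a - Suc i)" by simp
  then have "x * x ^ (a - Suc i) = x ^ (a - i)" by (metis power_Suc)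
  then show ?thesis using True unfolding pow_deriv_def by (simp add: ffac_Suc mult_ac)
qed (simp add: pow_deriv_def)

definition monomial_deriv :: "nat \<times> nat \<times> nat \<Rightarrow> nat \<times> nat \<times> nat \<Rightarrow> pt \<Rightarrow> complex" where
  "monomial_deriv u ijl P = (case u of (a, b, e) \<Rightarrow> case ijl of (i, j, l) \<Rightarrow> case P of (x, y, z) \<Rightarrow>
     pow_deriv a i x * pow_deriv b j y * pow_deriv e l z)"

lemma pd_eval_monomial_deriv:
  "pd_eval d c (i, j, l) (x, y, z) = (\<Sum>u\<in>form_monos d. c u * monomial_deriv u (i, j, l) (x, y, z))"
  unfolding pd_eval_def monomial_deriv_def pow_deriv_def prod.case by (intro sum.cong) auto

lemma monomial_deriv_euler:
  assumes "u \<in> form_monos d"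
  shows "x * monomial_deriv u (Suc i, j, l) (x, y, z) + y * monomial_deriv u (i, Suc j, l) (x, y, z)
      + z * monomial_deriv u (i, j, Suc l) (x, y, z)
    = of_nat (d - (i + j + l)) * monomial_deriv u (i, j, l) (x, y, z)"
proof -
  obtain a b e where u: "u = (a, b, e)" by (cases u)
  have "x * monomial_deriv u (Suc i, j, l) (x, y, z) + y * monomial_deriv u (i, Suc j, l) (x, y, z)
      + z * monomial_deriv u (i, j, Suc l) (x, y, z)
    = (x * pow_deriv a (Suc i) x) * pow_deriv b j y * pow_deriv e l z
      + pow_deriv a i x * (y * pow_deriv b (Suc j) y) * pow_deriv e l z
      + pow_deriv a i x * pow_deriv b j y * (z * pow_deriv e (Suc l) z)"
    unfolding u monomial_deriv_def by (simp only: prod.case ac_simps)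
  also have "\<dots> = of_nat ((a - i) + (b - j) + (e - l)) * monomial_deriv u (i, j, l) (x, y, z)"
    unfolding pow_deriv_Suc u monomial_deriv_def by (simp add: algebra_simps)
  also have "\<dots> = of_nat (d - (i + j + l)) * monomial_deriv u (i, j, l) (x, y, z)"
    using assms unfolding u by (auto simp: form_monos_def monomial_deriv_def pow_deriv_def)
  finally show ?thesis .
qed

lemma pd_eval_euler:
  "x * pd_eval d c (Suc i, j, l) (x, y, z) + y * pd_eval d c (i, Suc j, l) (x, y, z)
     + z * pd_eval d c (i, j, Suc l) (x, y, z)
   = of_nat (d - (i + j + l)) * pd_eval d c (i, j, l) (x, y, z)"
proof -
  have "x * (c u * monomial_deriv u (Suc i, j, l) (x, y, z)) + y * (c u * monomial_deriv u (i, Suc j, l) (x, y, z))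
      + z * (c u * monomial_deriv u (i, j, Suc l) (x, y, z))
    = of_nat (d - (i + j + l)) * (c u * monomial_deriv u (i, j, l) (x, y, z))" if "u \<in> form_monos d" for u
    using arg_cong[OF monomial_deriv_euler[OF that], of "\<lambda>t. c u * t"] by (simp add: algebra_simps)
  then show ?thesis
    unfolding pd_eval_monomial_deriv sum_distrib_left sum.distrib[symmetric] by (rule sum.cong[OF refl])
qed

text \<open>By Euler's identity a \<open>z\<close>-derivative is determined by derivatives of lower order in \<open>z\<close>.\<close>

lemma mult_ge_if_xy_derivs_vanish:
  assumes "z \<noteq> 0" and xy: "\<And>i j. int (i + j) < m \<Longrightarrow> pd_eval d c (i, j, 0) (x, y, z) = 0"
  shows "mult_ge d c m (x, y, z)"
proof -
  have "\<forall>i j. int (i + j + l) < m \<longrightarrow> pd_eval d c (i, j, l) (x, y, z) = 0" for l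
  proof (induction l)
    case 0
    then show ?case using xy by simp
  next
    case (Suc l)
    show ?case
    proof (intro allI impI)
      fix i j assume "int (i + j + Suc l) < m"
      then have "pd_eval d c (Suc i, j, l) (x, y, z) = 0" "pd_eval d c (i, Suc j, l) (x, y, z) = 0"
        "pd_eval d c (i, j, l) (x, y, z) = 0"
        using Suc.IH by simp_all
      then show "pd_eval d c (i, j, Suc l) (x, y, z) = 0"
        using pd_eval_euler[of x d c i j l y z] \<open>z \<noteq> 0\<close> by simp
    qed
  qed
  then show ?thesis unfolding mult_ge_def by blast
qed

text \<open>The conditions: derivatives \<open>\<partial>\<^sub>x\<^sup>a \<partial>\<^sub>y\<^sup>b\<close> with \<open>a + b < m\<^sub>i\<close> at the \<open>i\<close>-th point.\<close>

definition point_conditions :: "nat \<Rightarrow> (nat \<Rightarrow> int) \<Rightarrow> (nat \<times> nat \<times> nat) set" where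
  "point_conditions n m = (SIGMA i:{..<n}. {(a, b). a + b < nat (m i)})"

lemma chi_eq_monomials_minus_conditions:
  assumes "d \<ge> 0" "\<forall>i<n. m i \<ge> 0"
  shows "chi n d m = int (card (form_monos (nat d))) - int (card (point_conditions n m))"
proof -
  have "nat (d + 1) = nat d + 1" using \<open>d \<ge> 0\<close> by simp
  then have "2 * int (card (form_monos (nat d))) = (d + 1) * (d + 2)"
    using int_card_pairs_sum_less[of "d + 1"] \<open>d \<ge> 0\<close> unfolding card_form_monos
    by (simp add: algebra_simps)
  then have monomials: "(d + 1) * (d + 2) div 2 = int (card (form_monos (nat d)))" by simp
  have "m i * (m i + 1) = 2 * int (card {(a, b). a + b < nat (m i)})" if "i < n" for i
    using int_card_pairs_sum_less assms(2) that by simp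
  then have "(\<Sum>i<n. m i * (m i + 1) div 2) = (\<Sum>i<n. int (card {(a, b). a + b < nat (m i)}))"
    by (intro sum.cong) auto
  also have "\<dots> = int (card (point_conditions n m))"
    unfolding point_conditions_def using finite_pairs_sum_less by simp
  finally show ?thesis unfolding chi_def monomials by simp
qed

text \<open>A nonzero solution of the linear system exists because \<open>\<chi>\<close> counts unknowns minus equations.\<close>

lemma effective_if_chi_pos:
  assumes "d \<ge> 0" "\<forall>i<n. m i \<ge> 0" "chi n d m \<ge> 1" and z: "\<forall>i<n. snd (snd (pts i)) \<noteq> 0"
  shows "effective n pts d m"
proof -
  define U where "U = form_monos (nat d)"
  define E where "E = point_conditions n m"
  have "finite U" unfolding U_def form_monos_def
    by (rule finite_subset[of _ "{..nat d} \<times> {..nat d} \<times> {..nat d}"]) auto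
  moreover have "finite E" unfolding E_def point_conditions_def using finite_pairs_sum_less by simp
  moreover have "card E < card U"
    using chi_eq_monomials_minus_conditions[OF assms(1,2)] assms(3) unfolding U_def E_def by simp
  ultimately obtain c where c: "\<exists>u\<in>U. c u \<noteq> 0"
    "\<forall>(i, a, b)\<in>E. (\<Sum>u\<in>U. monomial_deriv u (a, b, 0) (pts i) * c u) = 0"
    using homogeneous_system_nontrivial_solution[of E U "\<lambda>(i, a, b) u. monomial_deriv u (a, b, 0) (pts i)"]
    by (auto simp: case_prod_beta)
  define c' where "c' u = (if u \<in> U then c u else 0)" for u
  have "mult_ge (nat d) c' (m i) (pts i)" if "i < n" for i
  proof -
    obtain x y w where pt: "pts i = (x, y, w)" by (cases "pts i")
    have "pd_eval (nat d) c' (a, b, 0) (x, y, w) = 0" if "int (a + b) < m i" for a b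
    proof -
      have "pd_eval (nat d) c' (a, b, 0) (x, y, w) = (\<Sum>u\<in>U. monomial_deriv u (a, b, 0) (pts i) * c u)"
        unfolding pd_eval_monomial_deriv c'_def U_def by (simp add: pt mult.commute)
      also have "\<dots> = 0" using c(2) \<open>i < n\<close> that unfolding E_def point_conditions_def by auto
      finally show ?thesis .
    qed
    then show ?thesis unfolding pt using z \<open>i < n\<close> pt by (intro mult_ge_if_xy_derivs_vanish) auto
  qed
  moreover have "hom_form (nat d) c'" "\<exists>u. c' u \<noteq> 0"
    using c(1) unfolding hom_form_def c'_def U_def by auto
  ultimately show ?thesis unfolding effective_def using \<open>d \<ge> 0\<close> by blast
qed

section \<open>Very general points\<close>

lemma effective_line: "effective n pts 1 (\<lambda>_. 0)"
proof -
  define c :: "nat \<times> nat \<times> nat \<Rightarrow> complex" where "c u = (if u = (1, 0, 0) then 1 else 0)" for u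
  have "hom_form 1 c" unfolding hom_form_def c_def form_monos_def by simp
  moreover have "c (1, 0, 0) \<noteq> 0" unfolding c_def by simp
  ultimately show ?thesis unfolding effective_def mult_ge_def by auto
qed

lemma ample_A_bounds:
  assumes "ample_A n pts t"
  shows "t > 0" "real n < t\<^sup>2"
proof -
  have "inter n (Acls t) (icls 1 (\<lambda>_. 0)) > 0"
    using assms effective_line unfolding ample_A_def by auto
  then show "t > 0" by (simp add: inter_Acls)
  show "real n < t\<^sup>2" using assms unfolding ample_A_def inter_Acls by simp
qed

text \<open>The monomial \<open>z\<^sub>j\<close> in the \<open>3n\<close> homogeneous coordinates of the points (the constant 1 for \<open>j \<ge> n\<close>).\<close>

definition z_monomial :: "nat \<Rightarrow> nat \<Rightarrow> (nat \<Rightarrow> nat) \<Rightarrow> complex" where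
  "z_monomial n j \<alpha> = (if \<alpha> = (\<lambda>v. of_bool (j < n \<and> v = 3 * j + 2)) then 1 else 0)"

lemma z_monomial_eval:
  "mpoly_eval (3 * n) (z_monomial n j) (flat_pts pts) = (if j < n then snd (snd (pts j)) else 1)"
proof -
  have "{\<alpha>. z_monomial n j \<alpha> \<noteq> 0} = {\<lambda>v. of_bool (j < n \<and> v = 3 * j + 2)}"
    unfolding z_monomial_def by auto
  then have "mpoly_eval (3 * n) (z_monomial n j) (flat_pts pts)
      = (\<Prod>v<3 * n. flat_pts pts v ^ of_bool (j < n \<and> v = 3 * j + 2))"
    unfolding mpoly_eval_def by (simp add: z_monomial_def)
  also have "\<dots> = (\<Prod>v<3 * n. if j < n \<and> v = 3 * j + 2 then flat_pts pts v else 1)"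
    by (intro prod.cong) auto
  also have "\<dots> = (if j < n then flat_pts pts (3 * j + 2) else 1)"
    by (auto simp: prod.delta)
  also have "\<dots> = (if j < n then snd (snd (pts j)) else 1)"
  proof -
    have "(3 * j + 2) div 3 = j" "(3 * j + 2) mod 3 = 2" by presburger+
    then show ?thesis unfolding flat_pts_def by (cases "pts j") auto
  qed
  finally show ?thesis .
qed

lemma very_general_if_z_nonzero:
  assumes "\<And>pts. \<forall>i<n. snd (snd (pts i)) \<noteq> 0 \<Longrightarrow> P pts"
  shows "very_general n P"
  unfolding very_general_def
proof (intro exI[of _ "z_monomial n"] conjI allI impI)
  fix j
  show "mpoly_ok (3 * n) (z_monomial n j)"
    unfolding mpoly_ok_def z_monomial_def by auto
  show "\<exists>\<alpha>. z_monomial n j \<alpha> \<noteq> 0" unfolding z_monomial_def by auto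
next
  fix pts :: "nat \<Rightarrow> pt"
  assume "(\<forall>i<n. pts i \<noteq> (0, 0, 0)) \<and> (\<forall>j. mpoly_eval (3 * n) (z_monomial n j) (flat_pts pts) \<noteq> 0)"
  then have "\<forall>i<n. snd (snd (pts i)) \<noteq> 0" using z_monomial_eval by metis
  then show "P pts" by (rule assms)
qed

context sqrt_period_two
begin

lemma convergent_class:
  assumes "odd k" and z: "\<forall>i<n. snd (snd (pts i)) \<noteq> 0"
  shows "\<exists>d mk :: int. 2 * d = cf_p (sqrt n) k - 3 \<and> 2 * mk = cf_q (sqrt n) k - 1 \<and>
           effective n pts d (\<lambda>_. mk) \<and> chi n d (\<lambda>_. mk) = 1 \<and>
           2 * inter n (Bcls n) (icls d (\<lambda>_. mk)) < inter n (Bcls n) canon"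
proof -
  obtain j where k: "k = 2 * j + 1" using \<open>odd k\<close> by (rule oddE)
  define p where "p = cf_p (sqrt n) k"
  define q where "q = cf_q (sqrt n) k"
  have pell: "p\<^sup>2 - n * q\<^sup>2 = 9 - int n" and "p > 0" "q > 0" "odd p" "odd q"
    using convergent_pell[of j] unfolding p_def q_def k by auto
  obtain x where "p = 2 * x + 1" using \<open>odd p\<close> by (rule oddE)
  then obtain d where d: "p = 2 * d + 3" by (intro that[of "x - 1"]) simp
  obtain mk where mk: "q = 2 * mk + 1" using \<open>odd q\<close> by (rule oddE)
  have "mk \<ge> 0" using \<open>q > 0\<close> mk by simp
  have "int n * 1 \<le> int n * q\<^sup>2" using \<open>q > 0\<close> by (intro mult_left_mono) (simp_all add: one_le_power)
  then have "p\<^sup>2 \<ge> 3\<^sup>2" using pell by simp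
  then have "d \<ge> 0" using \<open>p > 0\<close> d abs_le_square_iff[of 3 p] by simp
  have "8 * chi n d (\<lambda>_. mk) = p\<^sup>2 - n * q\<^sup>2 + n - 1"
    unfolding chi_odd_squares d mk by simp
  then have chi: "chi n d (\<lambda>_. mk) = 1" using pell by simp
  have "p\<^sup>2 < n * q\<^sup>2" using pell n_gt_9 by simp
  then have "sqrt n * p < real n * q" using \<open>q > 0\<close> by (rule sqrt_mult_less_of_sq_less)
  then have "2 * inter n (Bcls n) (icls d (\<lambda>_. mk)) < inter n (Bcls n) canon"
    unfolding inter_Bcls d mk by (simp add: algebra_simps)
  moreover have "effective n pts d (\<lambda>_. mk)"
    using effective_if_chi_pos \<open>d \<ge> 0\<close> \<open>mk \<ge> 0\<close> chi z by simp
  ultimately show ?thesis using chi d mk unfolding p_def q_def by (intro exI[of _ d] exI[of _ mk]) simp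
qed

lemma ample_class_is_convergent:
  assumes "n \<le> 12" "effective n pts d m" "chi n d m \<ge> 1" "ample_A n pts t"
    "2 * inter n (Acls t) (icls d m) < inter n (Acls t) canon"
  shows "\<exists>k. odd k \<and> 2 * d = cf_p (sqrt n) k - 3 \<and> (\<forall>i<n. 2 * m i = cf_q (sqrt n) k - 1)"
proof -
  have "d \<ge> 0" using assms(2) unfolding effective_def by blast
  then have "(\<forall>i<n. m i = m 0) \<and> (2 * d + 3)\<^sup>2 - n * (2 * m 0 + 1)\<^sup>2 = 9 - int n \<and> 2 * m 0 + 1 > 0"
    using small_class_solves_pell[OF n_gt_9 assms(1)] assms(3,5) ample_A_bounds[OF assms(4)] by blast
  then have const: "\<forall>i<n. m i = m 0"
    and pell: "(2 * d + 3)\<^sup>2 - n * (2 * m 0 + 1)\<^sup>2 = 9 - int n" and "2 * m 0 + 1 > 0"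
    by blast+
  obtain j where j: "2 * d + 3 = cf_p (sqrt n) (2 * j + 1)" "2 * m 0 + 1 = cf_q (sqrt n) (2 * j + 1)"
    using pell_solution_is_convergent[OF pell] \<open>d \<ge> 0\<close> \<open>2 * m 0 + 1 > 0\<close> by auto
  show ?thesis
  proof (intro exI[of _ "2 * j + 1"] conjI allI impI)
    show "odd (2 * j + 1)" "2 * d = cf_p (sqrt n) (2 * j + 1) - 3" using j by simp_all
    fix i assume "i < n"
    then have "m i = m 0" using const by blast
    then show "2 * m i = cf_q (sqrt n) (2 * j + 1) - 1" using j by simp
  qed
qed

end

theorem theorem4p8:
  fixes n :: nat
  assumes "10 \<le> n" and "n \<le> 12"
  shows "very_general n (\<lambda>pts.
     (\<forall>k::nat. odd k \<longrightarrow>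
        (\<exists>d mk :: int. 2 * d = cf_p (sqrt n) k - 3 \<and> 2 * mk = cf_q (sqrt n) k - 1 \<and>
           effective n pts d (\<lambda>_. mk) \<and> chi n d (\<lambda>_. mk) = 1 \<and>
           2 * inter n (Bcls n) (icls d (\<lambda>_. mk)) < inter n (Bcls n) canon))
   \<and> (\<forall>(d::int) (m::nat \<Rightarrow> int).
        effective n pts d m \<and> chi n d m \<ge> 1 \<and>
        (\<exists>t::real. ample_A n pts t \<and> 2 * inter n (Acls t) (icls d m) < inter n (Acls t) canon)
        \<longrightarrow> (\<exists>k::nat. odd k \<and> 2 * d = cf_p (sqrt n) k - 3 \<and>
                        (\<forall>i<n. 2 * m i = cf_q (sqrt n) k - 1))))"
proof -
  have "6 div (int n - 9) * (int n - 9) = 6"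
    using assms by (cases "n = 10 \<or> n = 11 \<or> n = 12") auto
  then interpret sqrt_period_two n "6 div (int n - 9)"
    using assms by unfold_locales auto
  show ?thesis
    using convergent_class ample_class_is_convergent \<open>n \<le> 12\<close>
    by (intro very_general_if_z_nonzero) blast
qed

end
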